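(* Let $\sigma:[0,\infty)\to[0,\infty)$ be nondecreasing with $\lim_{t\to\infty}\sigma(t)=\infty$. Then $\alpha(\sigma)=\frac{1}{\gamma(\sigma)}$, where, since $\gamma(\sigma),\alpha(\sigma)\in[0,\infty]$, for the extreme values this means that $\gamma(\sigma)=\infty$ if and only if $\alpha(\sigma)=0$, and $\gamma(\sigma)=0$ if and only if $\alpha(\sigma)=\infty$.
   Context: For a measurable positive function $f$ on some $[A,\infty)$, its upper Matuszewska index is $\alpha(f):=\inf\{\alpha\in\mathbb{R}:\exists C_\alpha>0\ \forall\Lambda>1,\ \limsup_{x\to\infty}\sup_{\lambda\in[1,\Lambda]}\frac{f(\lambda x)}{\lambda^{\alpha}f(x)}\le C_\alpha\}$ (with $\inf\emptyset=\infty$); for $\sigma$ as in the claim, $\alpha(\sigma)$ means the index of the restriction of $\sigma$ to any $[A,\infty)$ with $A>0$ on which $\sigma>0$ (independent of $A$). For $\gamma>0$, say $(P_{\sigma,\gamma})$ holds if there is $K>1$ with $\limsup_{t\to\infty}\sigma(K^{\gamma}t)/\sigma(t)<K$; $\gamma(\sigma):=\sup\{\gamma>0:(P_{\sigma,\gamma})\text{ holds}\}$, and $\gamma(\sigma):=0$ if no $(P_{\sigma,\gamma})$ holds. *)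

theory Defs
  imports "HOL-Analysis.Analysis"
begin

text \<open>Upper Matuszewska index (values in the extended reals; Inf of the empty set is \<infinity>).
  Only the behaviour of f at infinity matters (limsup as x tends to infinity).\<close>
definition upper_matuszewska :: "(real \<Rightarrow> real) \<Rightarrow> ereal" where
  "upper_matuszewska f = Inf (ereal ` {a. \<exists>C>0. \<forall>\<Lambda>>1.
      Limsup at_top (\<lambda>x. SUP l\<in>{1..\<Lambda>}. ereal (f (l * x) / (l powr a * f x))) \<le> ereal C})"

definition P_prop :: "(real \<Rightarrow> real) \<Rightarrow> real \<Rightarrow> bool" where
  "P_prop \<sigma> \<gamma> \<longleftrightarrow> (\<exists>K>1. Limsup at_top (\<lambda>t. ereal (\<sigma> (K powr \<gamma> * t) / \<sigma> t)) < ereal K)"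

definition gamma_index :: "(real \<Rightarrow> real) \<Rightarrow> ereal" where
  "gamma_index \<sigma> = (if \<exists>\<gamma>>0. P_prop \<sigma> \<gamma>
      then Sup (ereal ` {\<gamma>. \<gamma> > 0 \<and> P_prop \<sigma> \<gamma>}) else 0)"

end

theory Submission
  imports Defs
begin

(* A real a is an admissible exponent for the Matuszewska index when
   sigma(l x) <= C l^a sigma(x) for large x, locally uniformly in l >= 1.  If a is admissible
   and gamma a < 1, then with l = K^gamma this reads sigma(K^gamma x) <= C K^(gamma a) sigma(x),
   and C K^(gamma a) < K once K is large: this is (P_{sigma,gamma}).  Conversely, (P_{sigma,gamma})
   gives sigma(L x) <= q sigma(x) with L = K^gamma and q < K; iterating and interpolating by
   monotonicity gives sigma(l x) <= q l^(log_L q) sigma(x), so log_L q < 1/gamma is admissible.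
   Hence the admissible exponents and the reciprocals of the admissible gamma have the same
   infimum.  Read in the extended reals, alpha(sigma) = inverse gamma(sigma) also covers the
   extreme cases, as inverse 0 = \<infinity> and inverse \<infinity> = 0 there. *)

lemma ereal_eq_if_same_positive_upper_bounds:
  fixes x y :: ereal
  assumes "0 \<le> x" "0 \<le> y" and same: "\<And>r. 0 < r \<Longrightarrow> x < ereal r \<longleftrightarrow> y < ereal r"
  shows "x = y"
proof (rule ccontr)
  assume "x \<noteq> y"
  then obtain u v where uv: "u < v" "{u, v} = {x, y}"
    by (metis insert_commute linorder_neqE)
  then obtain r where r: "u < ereal r" "ereal r < v" using ereal_dense2 by blast
  have "0 < r" using r uv assms(1,2) by (metis doubleton_eq_iff ereal_less(2) order_le_less_trans)
  then show False using same[of r] r uv by (auto simp: doubleton_eq_iff)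
qed

lemma ereal_inverse_less_iff:
  fixes g :: ereal
  assumes "0 \<le> g" "0 < r"
  shows "inverse g < ereal r \<longleftrightarrow> ereal (1 / r) < g"
  using assms by (cases g) (auto simp: field_simps)

lemma ereal_inverse_eq_if:
  "inverse (g :: ereal) = (if g = 0 then \<infinity> else if g = \<infinity> then 0 else ereal (1 / real_of_ereal g))"
  by (cases g) (auto simp: divide_inverse)

lemma Inf_ereal_eq_inverse_Sup_ereal:
  fixes A G :: "real set"
  assumes A_nonneg: "\<And>a. a \<in> A \<Longrightarrow> 0 \<le> a"
    and G_pos: "\<And>\<gamma>. \<gamma> \<in> G \<Longrightarrow> 0 < \<gamma>"
    and to_G: "\<And>a \<gamma>. a \<in> A \<Longrightarrow> 0 < \<gamma> \<Longrightarrow> \<gamma> * a < 1 \<Longrightarrow> \<gamma> \<in> G"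
    and to_A: "\<And>\<gamma>. \<gamma> \<in> G \<Longrightarrow> \<exists>a\<in>A. \<gamma> * a < 1"
  shows "Inf (ereal ` A) = inverse (if G = {} then 0 else Sup (ereal ` G))"
    (is "_ = inverse ?g")
proof (rule ereal_eq_if_same_positive_upper_bounds)
  have g_nonneg: "0 \<le> ?g"
  proof (cases "G = {}")
    case False
    then obtain \<gamma> where "\<gamma> \<in> G" by blast
    then have "ereal 0 \<le> ereal \<gamma>" using G_pos by (simp add: less_imp_le)
    also have "\<dots> \<le> Sup (ereal ` G)" using \<open>\<gamma> \<in> G\<close> by (rule SUP_upper)
    finally show ?thesis using False by (simp add: zero_ereal_def)
  qed simp
  then show "0 \<le> inverse ?g" by (rule inverse_ereal_ge0I)
  show "0 \<le> Inf (ereal ` A)" using A_nonneg by (auto intro: INF_greatest)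
  fix r :: real
  assume r: "0 < r"
  have "(\<exists>a\<in>A. a < r) \<longleftrightarrow> (\<exists>\<gamma>\<in>G. 1 / r < \<gamma>)"
  proof
    assume "\<exists>a\<in>A. a < r"
    then obtain a where a: "a \<in> A" "a < r" by blast
    \<comment> \<open>\<open>1/\<gamma>\<close> is the midpoint of \<open>a\<close> and \<open>r\<close>\<close>
    define \<gamma> where "\<gamma> = 2 / (a + r)"
    have "0 \<le> a" using A_nonneg a(1) .
    then have "0 < \<gamma>" "\<gamma> * a < 1" "1 / r < \<gamma>" using a(2) r by (auto simp: \<gamma>_def field_simps)
    then show "\<exists>\<gamma>\<in>G. 1 / r < \<gamma>" using to_G[OF a(1)] by blast
  next
    assume "\<exists>\<gamma>\<in>G. 1 / r < \<gamma>"
    then obtain \<gamma> a where "\<gamma> \<in> G" "1 / r < \<gamma>" "a \<in> A" "\<gamma> * a < 1" using to_A by blast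
    have "\<gamma> * a < \<gamma> * r"
      using \<open>1 / r < \<gamma>\<close> \<open>\<gamma> * a < 1\<close> r by (simp add: field_simps)
    then have "a < r" using G_pos \<open>\<gamma> \<in> G\<close> by simp
    then show "\<exists>a\<in>A. a < r" using \<open>a \<in> A\<close> by blast
  qed
  also have "\<dots> \<longleftrightarrow> ereal (1 / r) < ?g" using r by (auto simp: less_SUP_iff)
  finally show "Inf (ereal ` A) < ereal r \<longleftrightarrow> inverse ?g < ereal r"
    using ereal_inverse_less_iff[OF g_nonneg r] by (simp add: INF_less_iff)
qed

definition matuszewska_exponents :: "(real \<Rightarrow> real) \<Rightarrow> real set" where
  "matuszewska_exponents f = {a. \<exists>C>0. \<forall>\<Lambda>>1.
      Limsup at_top (\<lambda>x. SUP l\<in>{1..\<Lambda>}. ereal (f (l * x) / (l powr a * f x))) \<le> ereal C}"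

lemma upper_matuszewska_eq_Inf_exponents:
  "upper_matuszewska f = Inf (ereal ` matuszewska_exponents f)"
  unfolding upper_matuszewska_def matuszewska_exponents_def ..

lemma matuszewska_exponentsI:
  assumes "0 < C"
    and "\<And>\<Lambda>. 1 < \<Lambda> \<Longrightarrow> eventually (\<lambda>x. \<forall>l\<in>{1..\<Lambda>}. f (l * x) / (l powr a * f x) \<le> C) at_top"
  shows "a \<in> matuszewska_exponents f"
  unfolding matuszewska_exponents_def mem_Collect_eq
proof (intro exI[of _ C] conjI allI impI)
  fix \<Lambda> :: real
  assume "1 < \<Lambda>"
  from assms(2)[OF this]
  have "eventually (\<lambda>x. (SUP l\<in>{1..\<Lambda>}. ereal (f (l * x) / (l powr a * f x))) \<le> ereal C) at_top"
    by eventually_elim (auto intro: SUP_least)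
  then show "Limsup at_top (\<lambda>x. SUP l\<in>{1..\<Lambda>}. ereal (f (l * x) / (l powr a * f x))) \<le> ereal C"
    by (rule Limsup_bounded)
qed (fact \<open>0 < C\<close>)

lemma matuszewska_exponentsE:
  assumes "a \<in> matuszewska_exponents f"
  obtains C where "0 < C" "\<And>l. 1 \<le> l \<Longrightarrow> eventually (\<lambda>x. f (l * x) / (l powr a * f x) < C) at_top"
proof -
  obtain C where "0 < C" and C: "\<And>\<Lambda>. 1 < \<Lambda> \<Longrightarrow>
      Limsup at_top (\<lambda>x. SUP l\<in>{1..\<Lambda>}. ereal (f (l * x) / (l powr a * f x))) \<le> ereal C"
    using assms unfolding matuszewska_exponents_def by blast
  have "eventually (\<lambda>x. f (l * x) / (l powr a * f x) < C + 1) at_top" if "1 \<le> l" for l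
  proof -
    have "Limsup at_top (\<lambda>x. SUP l'\<in>{1..l + 1}. ereal (f (l' * x) / (l' powr a * f x))) < ereal (C + 1)"
      using C[of "l + 1"] that by (simp add: order_le_less_trans)
    then have "eventually (\<lambda>x. (SUP l'\<in>{1..l + 1}. ereal (f (l' * x) / (l' powr a * f x))) < ereal (C + 1)) at_top"
      by (rule Limsup_lessD)
    then show ?thesis
    proof eventually_elim
      case (elim x)
      have "ereal (f (l * x) / (l powr a * f x)) \<le> (SUP l'\<in>{1..l + 1}. ereal (f (l' * x) / (l' powr a * f x)))"
        using that by (intro SUP_upper) auto
      then have "ereal (f (l * x) / (l powr a * f x)) < ereal (C + 1)"
        using elim by (rule order_le_less_trans)
      then show ?case by simp
    qed
  qed
  with \<open>0 < C\<close> show ?thesis by (intro that[of "C + 1"]) auto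
qed

lemma matuszewska_exponent_nonneg:
  fixes \<sigma> :: "real \<Rightarrow> real"
  assumes mono: "mono_on {0..} \<sigma>" and pos: "eventually (\<lambda>x. 0 < \<sigma> x) at_top"
    and a: "a \<in> matuszewska_exponents \<sigma>"
  shows "0 \<le> a"
proof (rule ccontr)
  assume "\<not> 0 \<le> a"
  obtain C where "0 < C" and C: "\<And>l. 1 \<le> l \<Longrightarrow> eventually (\<lambda>x. \<sigma> (l * x) / (l powr a * \<sigma> x) < C) at_top"
    using matuszewska_exponentsE[OF a] by blast
  define l where "l = (C + 1) powr (- 1 / a)"
  have "1 < l" unfolding l_def using \<open>0 < C\<close> \<open>\<not> 0 \<le> a\<close> by (intro gr_one_powr) (auto simp: field_simps)
  have "l powr a = (C + 1) powr (- 1 / a * a)" by (simp add: l_def powr_powr)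
  also have "\<dots> = 1 / (C + 1)" using \<open>0 < C\<close> \<open>\<not> 0 \<le> a\<close> by (simp add: powr_minus_divide)
  finally have "l powr a = 1 / (C + 1)" .
  have "eventually (\<lambda>x. C + 1 \<le> \<sigma> (l * x) / (l powr a * \<sigma> x)) at_top"
    using pos eventually_ge_at_top[of 0]
  proof eventually_elim
    case (elim x)
    have "\<sigma> x \<le> \<sigma> (l * x)"
      using elim \<open>1 < l\<close> by (intro mono_onD[OF mono]) (auto simp: mult_le_cancel_right1)
    then have "(C + 1) * \<sigma> x \<le> (C + 1) * \<sigma> (l * x)" using \<open>0 < C\<close> by simp
    then show ?case using elim \<open>0 < C\<close> by (simp add: \<open>l powr a = 1 / (C + 1)\<close> field_simps)
  qed
  moreover have "eventually (\<lambda>x. \<sigma> (l * x) / (l powr a * \<sigma> x) < C) at_top"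
    using C \<open>1 < l\<close> by simp
  ultimately have "eventually (\<lambda>_. False) (at_top :: real filter)"
    by eventually_elim simp
  then show False by simp
qed


lemma P_prop_of_matuszewska_exponent:
  fixes \<sigma> :: "real \<Rightarrow> real"
  assumes pos: "eventually (\<lambda>x. 0 < \<sigma> x) at_top"
    and a: "a \<in> matuszewska_exponents \<sigma>" and "0 < \<gamma>" "\<gamma> * a < 1"
  shows "P_prop \<sigma> \<gamma>"
proof -
  obtain C where "0 < C" and C: "\<And>l. 1 \<le> l \<Longrightarrow> eventually (\<lambda>x. \<sigma> (l * x) / (l powr a * \<sigma> x) < C) at_top"
    using matuszewska_exponentsE[OF a] by blast
  define K where "K = (C + 1) powr (1 / (1 - \<gamma> * a))"
  have "1 < K" unfolding K_def using \<open>0 < C\<close> \<open>\<gamma> * a < 1\<close> by (intro gr_one_powr) auto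
  have "K = K powr (\<gamma> * a) * K powr (1 - \<gamma> * a)" using \<open>1 < K\<close> by (simp flip: powr_add)
  also have "K powr (1 - \<gamma> * a) = C + 1"
    unfolding K_def using \<open>0 < C\<close> \<open>\<gamma> * a < 1\<close> by (simp add: powr_powr)
  finally have "K = K powr (\<gamma> * a) + C * K powr (\<gamma> * a)" by (simp add: algebra_simps)
  moreover have "0 < K powr (\<gamma> * a)" using \<open>1 < K\<close> by simp
  ultimately have K: "C * K powr (\<gamma> * a) < K" by linarith
  have "1 \<le> K powr \<gamma>" using \<open>1 < K\<close> \<open>0 < \<gamma>\<close> by (intro ge_one_powr_ge_zero) auto
  from C[OF this] pos
  have "eventually (\<lambda>x. \<sigma> (K powr \<gamma> * x) / \<sigma> x \<le> C * K powr (\<gamma> * a)) at_top"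
  proof eventually_elim
    case (elim x)
    then show ?case using \<open>1 < K\<close> by (simp add: powr_powr divide_simps mult_ac)
  qed
  then have "Limsup at_top (\<lambda>x. ereal (\<sigma> (K powr \<gamma> * x) / \<sigma> x)) \<le> ereal (C * K powr (\<gamma> * a))"
    by (intro Limsup_bounded) simp
  also have "\<dots> < ereal K" using K by simp
  finally show ?thesis unfolding P_prop_def using \<open>1 < K\<close> by blast
qed

lemma dilation_step_iterate:
  fixes \<sigma> :: "real \<Rightarrow> real"
  assumes "1 \<le> L" "0 \<le> q" "0 \<le> x\<^sub>0"
    and step: "\<And>t. x\<^sub>0 \<le> t \<Longrightarrow> \<sigma> (L * t) \<le> q * \<sigma> t"
    and "x\<^sub>0 \<le> t"
  shows "\<sigma> (L ^ n * t) \<le> q ^ n * \<sigma> t"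
proof (induction n)
  case (Suc n)
  have "t \<le> L ^ n * t" using assms by (simp add: mult_le_cancel_right1)
  then have "\<sigma> (L * (L ^ n * t)) \<le> q * \<sigma> (L ^ n * t)" using assms by (intro step) simp
  also have "\<dots> \<le> q * (q ^ n * \<sigma> t)" using Suc \<open>0 \<le> q\<close> by (rule mult_left_mono)
  finally show ?case by (simp add: mult_ac)
qed simp

lemma dilation_step_powr_bound:
  fixes \<sigma> :: "real \<Rightarrow> real"
  assumes mono: "mono_on {0..} \<sigma>"
    and "1 < L" "1 \<le> q" "0 \<le> x\<^sub>0"
    and step: "\<And>t. x\<^sub>0 \<le> t \<Longrightarrow> \<sigma> (L * t) \<le> q * \<sigma> t"
    and nonneg: "\<And>t. x\<^sub>0 \<le> t \<Longrightarrow> 0 \<le> \<sigma> t"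
    and "x\<^sub>0 \<le> t" "1 \<le> l"
  shows "\<sigma> (l * t) \<le> q * l powr log L q * \<sigma> t"
proof -
  define n where "n = nat \<lfloor>log L l\<rfloor>"
  have "0 \<le> log L l" using assms by simp
  then have n: "real n \<le> log L l" "log L l < real (Suc n)" unfolding n_def by linarith+
  have "l < L powr real (Suc n)" using n(2) log_less_iff[of L l] assms by auto
  then have "l < L ^ Suc n" using assms by (subst (asm) powr_realpow) auto
  then have "\<sigma> (l * t) \<le> \<sigma> (L ^ Suc n * t)"
    using assms by (intro mono_onD[OF mono]) (auto intro: mult_right_mono)
  also have "\<dots> \<le> q ^ Suc n * \<sigma> t"
    using assms by (intro dilation_step_iterate[where x\<^sub>0 = x\<^sub>0]) auto
  also have "\<dots> = q * (q powr real n * \<sigma> t)" using \<open>1 \<le> q\<close> by (simp add: powr_realpow)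
  also have "\<dots> \<le> q * (q powr log L l * \<sigma> t)"
    using n(1) assms by (intro mult_left_mono mult_right_mono powr_mono) auto
  also have "q powr log L l = l powr log L q"
    using assms by (simp add: powr_def log_def)
  finally show ?thesis by (simp add: mult_ac)
qed


lemma matuszewska_exponent_of_P_prop:
  fixes \<sigma> :: "real \<Rightarrow> real"
  assumes mono: "mono_on {0..} \<sigma>" and pos: "eventually (\<lambda>x. 0 < \<sigma> x) at_top"
    and "0 < \<gamma>" "P_prop \<sigma> \<gamma>"
  shows "\<exists>a\<in>matuszewska_exponents \<sigma>. \<gamma> * a < 1"
proof -
  obtain K where "1 < K" and K: "Limsup at_top (\<lambda>t. ereal (\<sigma> (K powr \<gamma> * t) / \<sigma> t)) < ereal K"
    using \<open>P_prop \<sigma> \<gamma>\<close> unfolding P_prop_def by blast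
  then have "max (Limsup at_top (\<lambda>t. ereal (\<sigma> (K powr \<gamma> * t) / \<sigma> t))) 1 < ereal K" by simp
  then obtain q where q: "max (Limsup at_top (\<lambda>t. ereal (\<sigma> (K powr \<gamma> * t) / \<sigma> t))) 1 < ereal q"
    and "ereal q < ereal K"
    by (blast dest: ereal_dense2)
  define L where "L = K powr \<gamma>"
  have "1 < q" "q < K" "1 < L" using q \<open>ereal q < ereal K\<close> \<open>1 < K\<close> \<open>0 < \<gamma>\<close> by (auto simp: L_def intro: gr_one_powr)
  have "eventually (\<lambda>t. ereal (\<sigma> (L * t) / \<sigma> t) < ereal q) at_top"
    using q(1) unfolding L_def by (intro Limsup_lessD) simp
  then have "eventually (\<lambda>t. 0 \<le> t \<and> 0 < \<sigma> t \<and> \<sigma> (L * t) \<le> q * \<sigma> t) at_top"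
    using pos eventually_ge_at_top[of 0] by eventually_elim (auto simp: divide_less_eq)
  then obtain x\<^sub>0 where x\<^sub>0: "\<And>t. x\<^sub>0 \<le> t \<Longrightarrow> 0 \<le> t \<and> 0 < \<sigma> t \<and> \<sigma> (L * t) \<le> q * \<sigma> t"
    unfolding eventually_at_top_linorder by blast
  define a where "a = log L q"
  have bound: "\<sigma> (l * t) / (l powr a * \<sigma> t) \<le> q" if "x\<^sub>0 \<le> t" "1 \<le> l" for t l
  proof -
    have "0 \<le> x\<^sub>0" using x\<^sub>0[of x\<^sub>0] by simp
    have "\<sigma> (l * t) \<le> q * l powr a * \<sigma> t" unfolding a_def
      by (rule dilation_step_powr_bound[OF mono \<open>1 < L\<close>])
        (use x\<^sub>0 that \<open>1 < q\<close> \<open>0 \<le> x\<^sub>0\<close> in \<open>auto simp: less_imp_le\<close>)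
    then show ?thesis using x\<^sub>0[OF \<open>x\<^sub>0 \<le> t\<close>] \<open>1 \<le> l\<close> by (simp add: divide_le_eq mult_ac)
  qed
  have "eventually (\<lambda>t. \<forall>l\<in>{1..\<Lambda>}. \<sigma> (l * t) / (l powr a * \<sigma> t) \<le> q) at_top" for \<Lambda>
    using eventually_ge_at_top[of x\<^sub>0] by eventually_elim (auto intro: bound)
  then have "a \<in> matuszewska_exponents \<sigma>"
    using \<open>1 < q\<close> by (intro matuszewska_exponentsI[of q]) auto
  moreover have "\<gamma> * a < \<gamma> * log L K"
    unfolding a_def using \<open>0 < \<gamma>\<close> \<open>1 < q\<close> \<open>q < K\<close> \<open>1 < L\<close> by simp
  moreover have "\<gamma> * log L K = 1"
    unfolding L_def using \<open>0 < \<gamma>\<close> \<open>1 < K\<close> by (simp add: log_def ln_powr)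
  ultimately show ?thesis by auto
qed


theorem lemma2p10:
  fixes \<sigma> :: "real \<Rightarrow> real"
  assumes nonneg: "\<forall>t\<ge>0. \<sigma> t \<ge> 0"
    and mono: "mono_on {0..} \<sigma>"
    and lim: "filterlim \<sigma> at_top at_top"
  shows "upper_matuszewska \<sigma> =
           (if gamma_index \<sigma> = 0 then \<infinity>
            else if gamma_index \<sigma> = \<infinity> then 0
            else ereal (1 / real_of_ereal (gamma_index \<sigma>)))"
proof -
  have pos: "eventually (\<lambda>x. 0 < \<sigma> x) at_top"
    using lim by (simp add: filterlim_at_top_dense)
  define G where "G = {\<gamma>. 0 < \<gamma> \<and> P_prop \<sigma> \<gamma>}"
  have "upper_matuszewska \<sigma> = inverse (if G = {} then 0 else Sup (ereal ` G))"
    unfolding upper_matuszewska_eq_Inf_exponents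
    using matuszewska_exponent_nonneg[OF mono pos] P_prop_of_matuszewska_exponent[OF pos]
      matuszewska_exponent_of_P_prop[OF mono pos]
    by (intro Inf_ereal_eq_inverse_Sup_ereal) (auto simp: G_def)
  also have "(if G = {} then 0 else Sup (ereal ` G)) = gamma_index \<sigma>"
    unfolding gamma_index_def G_def by auto
  finally show ?thesis by (simp only: ereal_inverse_eq_if)
qed

end
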